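(* Let $a,b$ be nonnegative integers, let $G$ be a group and let $N\trianglelefteq G$ be a normal subgroup, with natural projection $\rho:G\to G/N$. Then: (i) If $S$ is a sub-$(a,b)$-valent Cayley set of $G$, then $\rho(S)\setminus\{1\}$ is a sub-$(a,b)$-valent Cayley set of $G/N$. (ii) If $G$ is a sub-$(a,b)$-valent group, then $G/N$ is also a sub-$(a,b)$-valent group.
   Context: An involution is an element of order $2$. A subset $S$ of a group $G$ is a Cayley set of $G$ if $1\notin S$, $S$ is inverse-closed ($S^{-1}=S$), and $S$ generates $G$. On pairs of nonnegative integers define $(a',b')\preccurlyeq(a,b)$ if and only if $b'\le b$ and $a'\le a+(b-b')/2$. A Cayley set $S$ is $(a,b)$-valent if it consists of exactly $a$ involutions and $b$ non-involutions; it is sub-$(a,b)$-valent if it consists of $a'$ involutions and $b'$ non-involutions with $(a',b')\preccurlyeq(a,b)$. A group is sub-$(a,b)$-valent if it has a sub-$(a,b)$-valent Cayley set. *)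

theory Defs
  imports "HOL-Algebra.Algebra"
begin

definition involution :: "('a, 'b) monoid_scheme \<Rightarrow> 'a \<Rightarrow> bool" where
  "involution G x \<longleftrightarrow> x \<in> carrier G \<and> group.ord G x = 2"

definition cayley_set :: "('a, 'b) monoid_scheme \<Rightarrow> 'a set \<Rightarrow> bool" where
  "cayley_set G S \<longleftrightarrow> S \<subseteq> carrier G \<and> \<one>\<^bsub>G\<^esub> \<notin> S \<and>
     (\<forall>s\<in>S. inv\<^bsub>G\<^esub> s \<in> S) \<and> generate G S = carrier G"

definition val_le :: "nat \<times> nat \<Rightarrow> nat \<times> nat \<Rightarrow> bool" where
  "val_le p q \<longleftrightarrow> snd p \<le> snd q \<and>
     real (fst p) \<le> real (fst q) + (real (snd q) - real (snd p)) / 2"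

definition sub_valent_cayley_set :: "('a, 'b) monoid_scheme \<Rightarrow> nat \<Rightarrow> nat \<Rightarrow> 'a set \<Rightarrow> bool" where
  "sub_valent_cayley_set G a b S \<longleftrightarrow> cayley_set G S \<and> finite S \<and>
     val_le (card {s\<in>S. involution G s}, card {s\<in>S. \<not> involution G s}) (a, b)"

definition sub_valent_group :: "('a, 'b) monoid_scheme \<Rightarrow> nat \<Rightarrow> nat \<Rightarrow> bool" where
  "sub_valent_group G a b \<longleftrightarrow> (\<exists>S. sub_valent_cayley_set G a b S)"

end

theory Submission
  imports Defs
begin

text \<open>A surjective homomorphism \<open>h\<close> maps a Cayley set \<open>S\<close> onto the Cayley set \<open>h(S) - {1}\<close>.
  Involutions of \<open>S\<close> go to involutions or to \<open>1\<close>, so the only way the valency can get worse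
  is that a non-involution \<open>x \<in> S\<close> acquires an involution as image. But then \<open>x \<noteq> x\<inverse>\<close> are both
  non-involutions of \<open>S\<close> with the same image, so every such new involution consumes two
  non-involutions of \<open>S\<close>, which is exactly the exchange rate built into \<open>\<preccurlyeq>\<close>.\<close>

lemma two_mul_card_image_le_card:
  assumes "finite A" and "\<And>x. x \<in> A \<Longrightarrow> g x \<in> A \<and> g x \<noteq> x \<and> f (g x) = f x"
  shows "2 * card (f ` A) \<le> card A"
proof -
  have "2 \<le> card {x\<in>A. f x = y}" if "y \<in> f ` A" for y
  proof -
    from that obtain x where x: "x \<in> A" "f x = y" by auto
    have "2 = card {x, g x}" using assms(2)[OF x(1)] by auto
    also have "\<dots> \<le> card {x\<in>A. f x = y}"
      using assms(1) assms(2)[OF x(1)] x by (intro card_mono) auto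
    finally show ?thesis .
  qed
  then have "(\<Sum>y\<in>f ` A. 2) \<le> (\<Sum>y\<in>f ` A. card {x\<in>A. f x = y})"
    by (rule sum_mono)
  then have "2 * card (f ` A) \<le> (\<Sum>y\<in>f ` A. card {x\<in>A. f x = y})"
    by (simp add: mult.commute)
  also have "\<dots> = card (\<Union>y\<in>f ` A. {x\<in>A. f x = y})"
    using assms(1) by (intro card_UN_disjoint[symmetric]) auto
  also have "\<dots> = card A"
    by (rule arg_cong[where f = card]) auto
  finally show ?thesis .
qed

lemma val_le_trade:
  assumes "val_le (a', b') q" and "b'' + 2 * k \<le> b'" and "a'' \<le> a' + k"
  shows "val_le (a'', b'') q"
proof (cases q)
  case (Pair a b)
  with assms(1) have "b' \<le> b" "real a' \<le> real a + (real b - real b') / 2"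
    by (simp_all add: val_le_def)
  moreover have "real b'' + 2 * real k \<le> real b'" "real a'' \<le> real a' + real k"
    using of_nat_mono[OF assms(2), where 'a = real] of_nat_mono[OF assms(3), where 'a = real]
    by (simp_all only: of_nat_add of_nat_mult of_nat_numeral)
  ultimately show ?thesis
    using Pair by (simp add: val_le_def field_simps)
qed

lemma (in group) generate_Diff_one: "generate G (S - {\<one>}) = generate G S"
proof
  show "generate G (S - {\<one>}) \<subseteq> generate G S" by (rule mono_generate) blast
  show "generate G S \<subseteq> generate G (S - {\<one>})"
  proof
    fix x assume "x \<in> generate G S"
    then show "x \<in> generate G (S - {\<one>})"
    proof induction
      case (inv s)
      then show ?case by (cases "s = \<one>") (auto intro: generate.intros)
    qed (auto intro: generate.intros)
  qed
qed

lemma (in group) involution_iff: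
  assumes "x \<in> carrier G"
  shows "involution G x \<longleftrightarrow> x \<noteq> \<one> \<and> x \<otimes> x = \<one>"
proof -
  have "x \<otimes> x = \<one> \<longleftrightarrow> ord x dvd 2"
    using assms pow_eq_id[of x 2] by (simp add: numeral_2_eq_2)
  moreover have "x \<noteq> \<one> \<longleftrightarrow> ord x \<noteq> 1"
    using assms ord_eq_1 by blast
  moreover have "ord x dvd 2 \<and> ord x \<noteq> 1 \<longleftrightarrow> ord x = 2"
    using two_is_prime_nat by (auto simp: prime_nat_iff)
  ultimately show ?thesis
    using assms by (auto simp: involution_def)
qed

lemma (in group) involution_inv_iff:
  "x \<in> carrier G \<Longrightarrow> involution G (inv x) \<longleftrightarrow> involution G x"
  by (simp add: involution_def)

lemma (in group) inv_eq_self_iff: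
  "x \<in> carrier G \<Longrightarrow> inv x = x \<longleftrightarrow> x \<otimes> x = \<one>"
  by (metis inv_equality r_inv)

lemma (in group_hom) involution_image:
  assumes "involution G x"
  shows "h x = \<one>\<^bsub>H\<^esub> \<or> involution H (h x)"
proof -
  have x: "x \<in> carrier G" "x \<otimes>\<^bsub>G\<^esub> x = \<one>\<^bsub>G\<^esub>"
    using assms G.involution_iff by (auto simp: involution_def)
  then have "h x \<otimes>\<^bsub>H\<^esub> h x = \<one>\<^bsub>H\<^esub>" by (metis hom_mult hom_one)
  then show ?thesis using x H.involution_iff by auto
qed

lemma (in group_hom) cayley_set_image:
  assumes "h ` carrier G = carrier H" and "cayley_set G S"
  shows "cayley_set H (h ` S - {\<one>\<^bsub>H\<^esub>})"
proof -
  have S: "S \<subseteq> carrier G" "\<forall>s\<in>S. inv\<^bsub>G\<^esub> s \<in> S" "generate G S = carrier G"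
    using assms(2) by (auto simp: cayley_set_def)
  have "inv\<^bsub>H\<^esub> t \<in> h ` S - {\<one>\<^bsub>H\<^esub>}" if "t \<in> h ` S - {\<one>\<^bsub>H\<^esub>}" for t
  proof -
    from that obtain s where s: "s \<in> S" "t = h s" "t \<noteq> \<one>\<^bsub>H\<^esub>" by auto
    then have "inv\<^bsub>H\<^esub> t = h (inv\<^bsub>G\<^esub> s)" and "inv\<^bsub>H\<^esub> t \<noteq> \<one>\<^bsub>H\<^esub>"
      using S(1) by (auto simp: subsetD)
    then show ?thesis using s S(2) by auto
  qed
  moreover have "generate H (h ` S - {\<one>\<^bsub>H\<^esub>}) = carrier H"
    using H.generate_Diff_one generate_img[OF S(1)] S(3) assms(1) by simp
  ultimately show ?thesis
    using S(1) by (auto simp: cayley_set_def)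
qed

lemma (in group_hom) card_involution_images_of_non_involutions:
  assumes "finite S" and "S \<subseteq> carrier G" and "\<forall>s\<in>S. inv\<^bsub>G\<^esub> s \<in> S"
  defines "A \<equiv> {s\<in>S. \<not> involution G s \<and> involution H (h s)}"
  shows "2 * card (h ` A) \<le> card A"
proof (rule two_mul_card_image_le_card[where g = "m_inv G"])
  show "finite A" using assms(1) by (simp add: A_def)
  fix x assume "x \<in> A"
  then have x: "x \<in> S" "x \<in> carrier G" "\<not> involution G x" "involution H (h x)"
    using assms(2) by (auto simp: A_def)
  then have "x \<noteq> \<one>\<^bsub>G\<^esub>" by (auto simp: involution_def)
  then have "inv\<^bsub>G\<^esub> x \<noteq> x" using x G.involution_iff G.inv_eq_self_iff by blast
  moreover have "h (inv\<^bsub>G\<^esub> x) = h x"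
    using x H.involution_iff H.inv_eq_self_iff by auto
  ultimately show "inv\<^bsub>G\<^esub> x \<in> A \<and> inv\<^bsub>G\<^esub> x \<noteq> x \<and> h (inv\<^bsub>G\<^esub> x) = h x"
    using x assms(3) G.involution_inv_iff by (auto simp: A_def)
qed

lemma (in group_hom) sub_valent_cayley_set_image:
  assumes "h ` carrier G = carrier H" and "sub_valent_cayley_set G a b S"
  shows "sub_valent_cayley_set H a b (h ` S - {\<one>\<^bsub>H\<^esub>})"
proof -
  define T where "T = h ` S - {\<one>\<^bsub>H\<^esub>}"
  define SI where "SI = {s\<in>S. involution G s}"
  define SN where "SN = {s\<in>S. \<not> involution G s}"
  define A where "A = {s\<in>S. \<not> involution G s \<and> involution H (h s)}"
  define B where "B = {s\<in>S. \<not> involution G s \<and> \<not> involution H (h s) \<and> h s \<noteq> \<one>\<^bsub>H\<^esub>}"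
  have S: "cayley_set G S" "finite S" "val_le (card SI, card SN) (a, b)"
    using assms(2) by (auto simp: sub_valent_cayley_set_def SI_def SN_def)
  have fin: "finite SI" "finite A" "finite B"
    using S(2) by (simp_all add: SI_def A_def B_def)
  have "{t\<in>T. \<not> involution H t} \<subseteq> h ` B"
    using involution_image by (fastforce simp: T_def B_def)
  then have non_inv: "card {t\<in>T. \<not> involution H t} \<le> card B"
    using fin(3) by (meson card_image_le card_mono finite_imageI le_trans)
  have "{t\<in>T. involution H t} \<subseteq> h ` SI \<union> h ` A"
    by (auto simp: T_def SI_def A_def)
  then have "card {t\<in>T. involution H t} \<le> card (h ` SI \<union> h ` A)"
    using fin by (simp add: card_mono)
  also have "\<dots> \<le> card (h ` SI) + card (h ` A)" by (rule card_Un_le)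
  also have "\<dots> \<le> card SI + card (h ` A)" using fin(1) by (simp add: card_image_le)
  finally have inv: "card {t\<in>T. involution H t} \<le> card SI + card (h ` A)" .
  have "card A + card B = card (A \<union> B)"
    using fin by (intro card_Un_disjoint[symmetric]) (auto simp: A_def B_def)
  also have "\<dots> \<le> card SN"
    using S(2) by (intro card_mono) (auto simp: SN_def A_def B_def)
  finally have "card A + card B \<le> card SN" .
  moreover have "2 * card (h ` A) \<le> card A"
    using card_involution_images_of_non_involutions S(1,2)
    by (simp add: A_def cayley_set_def)
  ultimately have "val_le (card {t\<in>T. involution H t}, card {t\<in>T. \<not> involution H t}) (a, b)"
    using val_le_trade[OF S(3) _ inv] non_inv by simp
  then show ?thesis
    using cayley_set_image[OF assms(1) S(1)] S(2)
    by (simp add: sub_valent_cayley_set_def T_def)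
qed

theorem lemma2p1:
  fixes G (structure) and N :: "'a set" and a b :: nat
  assumes "group G" and "N \<lhd> G"
  shows "(\<forall>S. sub_valent_cayley_set G a b S \<longrightarrow>
            sub_valent_cayley_set (G Mod N) a b ((\<lambda>g. N #> g) ` S - {\<one>\<^bsub>G Mod N\<^esub>}))
       \<and> (sub_valent_group G a b \<longrightarrow> sub_valent_group (G Mod N) a b)"
proof -
  have hom: "group_hom G (G Mod N) (\<lambda>g. N #> g)"
    using assms by (simp add: group_hom_def group_hom_axioms_def normal.factorgroup_is_group
        normal.r_coset_hom_Mod)
  have onto: "(\<lambda>g. N #> g) ` carrier G = carrier (G Mod N)"
    by (auto simp: FactGroup_def RCOSETS_def)
  have "sub_valent_cayley_set (G Mod N) a b ((\<lambda>g. N #> g) ` S - {\<one>\<^bsub>G Mod N\<^esub>})"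
    if "sub_valent_cayley_set G a b S" for S
    using group_hom.sub_valent_cayley_set_image[OF hom onto that] .
  then show ?thesis by (auto simp: sub_valent_group_def)
qed

end
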